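(* Let $(\ell_n)_{n\in\mathbb N}$, $(\sigma_{n,0})_{n\in\mathbb N}$, $(\sigma_{n,1})_{n\in\mathbb N}$, $(\sigma_{n,-1})_{n\in\mathbb N}$ be sequences of strictly positive real numbers and let $(\kappa_n)_{n\in\mathbb N}$ be a sequence of real numbers. Then for every $x_0\in\mathbb R$ there exists at least one $x_1>0$ such that the sequence $(x_n)_{n\in\mathbb N}$ determined by $$\ell_n = x_n\big(\sigma_{n,1}x_{n+1}+\sigma_{n,0}x_n+\sigma_{n,-1}x_{n-1}\big)+\kappa_n x_n,\qquad n\in\mathbb N,$$ is well defined and positive, i.e. $x_n>0$ for all $n\in\mathbb N$.
   Context: $\mathbb N=\{1,2,3,\dots\}$. Since $\sigma_{n,1}>0$, the displayed equation, given $x_{n-1}$ and $x_n\neq 0$, determines $x_{n+1}$ uniquely; thus the sequence is determined recursively by $x_0$ and $x_1$ as long as no term $x_n$ with $n\ge 1$ vanishes. *)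

theory Defs
  imports Complex_Main
begin

end

theory Submission
  imports Defs "HOL-Analysis.Analysis" "HOL-Real_Asymp.Real_Asymp"
begin

(*
  Shoot with the parameter y = x_1. As long as x_1, ..., x_n are positive, the recurrence solved for
  x_(n+1) makes it a continuous function of y; it tends to +infinity where x_n tends to 0 while x_(n-1)
  stays bounded, and it is negative wherever x_n is large. Inductively there are intervals of shooting
  values on which x_1, ..., x_n are positive, x_n tends to 0 at one endpoint and x_(n+1) takes a
  negative value. The first zero of x_(n+1) seen from that endpoint cuts off the next interval, whose
  closure lies in the previous one, and a point common to all these closed intervals is the required x_1.
*)

lemma first_zero_after_pole:
  fixes f :: "real \<Rightarrow> real"
  assumes cont: "continuous_on {a<..<b} f"
    and pole: "filterlim f at_top (at_right a)"
    and p: "p \<in> {a<..<b}" "f p < 0"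
  obtains z where "z \<in> {a<..<p}" "f z = 0" "\<And>y. y \<in> {a<..<z} \<Longrightarrow> f y > 0"
proof -
  have "\<forall>\<^sub>F y in at_right a. f y > 0"
    using pole by (simp add: filterlim_at_top_dense)
  then obtain c where "c > a" and c: "\<And>y. a < y \<Longrightarrow> y < c \<Longrightarrow> f y > 0"
    unfolding eventually_at_right_field by blast
  define d where "d = (a + min c p) / 2"
  have d: "a < d" "d < p" "d < c" "f d > 0"
    using \<open>c > a\<close> p c[of d] by (auto simp: d_def)
  have cont_dp: "continuous_on {d..p} f"
    using cont by (rule continuous_on_subset) (use d p in auto)
  define Z where "Z = {y \<in> {d..p}. f y = 0}"
  have "compact Z"
    unfolding compact_eq_bounded_closed
  proof
    show "bounded Z"
      by (rule bounded_subset[OF bounded_closed_interval]) (auto simp: Z_def)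
    show "closed Z"
      unfolding Z_def by (rule continuous_closed_preimage_constant[OF cont_dp closed_atLeastAtMost])
  qed
  moreover have "Z \<noteq> {}"
  proof -
    obtain w where "d \<le> w" "w \<le> p" "f w = 0"
      using IVT2'[of f p 0 d] d p(2) cont_dp by auto
    then show ?thesis by (auto simp: Z_def)
  qed
  ultimately obtain z where z: "z \<in> Z" and z_least: "\<And>w. w \<in> Z \<Longrightarrow> z \<le> w"
    using compact_attains_inf[of Z] by auto
  show ?thesis
  proof
    show "z \<in> {a<..<p}" "f z = 0"
      using z d p by (auto simp: Z_def less_le)
    fix y assume y: "y \<in> {a<..<z}"
    show "f y > 0"
    proof (cases "y < c")
      case False
      show ?thesis
      proof (rule ccontr)
        assume "\<not> f y > 0"
        moreover have "d \<le> y" "y \<le> p"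
          using y z d False by (auto simp: Z_def)
        moreover have "continuous_on {d..y} f"
          using cont_dp by (rule continuous_on_subset) (use \<open>y \<le> p\<close> in auto)
        ultimately obtain w where "d \<le> w" "w \<le> y" "f w = 0"
          using IVT2'[of f y 0 d] d by auto
        then show False
          using z_least[of w] y z \<open>d < p\<close> by (auto simp: Z_def)
      qed
    qed (use c y in auto)
  qed
qed

lemma first_zero_before_pole:
  fixes f :: "real \<Rightarrow> real"
  assumes cont: "continuous_on {a<..<b} f"
    and pole: "filterlim f at_top (at_left b)"
    and p: "p \<in> {a<..<b}" "f p < 0"
  obtains z where "z \<in> {p<..<b}" "f z = 0" "\<And>y. y \<in> {z<..<b} \<Longrightarrow> f y > 0"
proof -
  have "continuous_on {-b<..<-a} (\<lambda>y. f (- y))"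
    by (rule continuous_on_compose2[OF cont]) (auto intro: continuous_intros)
  moreover have "filterlim (\<lambda>y. f (- y)) at_top (at_right (- b))"
    using pole by (simp add: filterlim_at_left_to_right)
  moreover have "- p \<in> {-b<..<-a}" "f (- (- p)) < 0"
    using p by auto
  ultimately obtain z where z: "z \<in> {-b<..<-p}" "f (- z) = 0"
    and pos: "\<And>y. y \<in> {-b<..<z} \<Longrightarrow> f (- y) > 0"
    by (rule first_zero_after_pole) blast
  show ?thesis
  proof (rule that[of "- z"])
    fix y assume "y \<in> {-z<..<b}"
    then show "f y > 0"
      using pos[of "- y"] by auto
  qed (use z in auto)
qed

locale three_term_recurrence =
  fixes l s0 s1 sm kappa :: "nat \<Rightarrow> real"
  assumes l_pos: "n \<ge> 1 \<Longrightarrow> l n > 0"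
    and s0_pos: "n \<ge> 1 \<Longrightarrow> s0 n > 0"
    and s1_pos: "n \<ge> 1 \<Longrightarrow> s1 n > 0"
    and sm_pos: "n \<ge> 1 \<Longrightarrow> sm n > 0"
begin

definition next_term :: "nat \<Rightarrow> real \<Rightarrow> real \<Rightarrow> real" where
  "next_term n v u = (l n / v - kappa n - s0 n * v - sm n * u) / s1 n"

lemma recurrence_iff_next_term:
  assumes "n \<ge> 1" "v \<noteq> 0"
  shows "l n = v * (s1 n * w + s0 n * v + sm n * u) + kappa n * v \<longleftrightarrow> w = next_term n v u"
  using s1_pos[OF assms(1)] assms(2) unfolding next_term_def by (auto simp: field_simps)

lemma next_term_tendsto_at_top:
  assumes n: "n \<ge> 1"
    and v: "(v \<longlongrightarrow> 0) F" "\<forall>\<^sub>F y in F. v y > 0"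
    and u: "\<forall>\<^sub>F y in F. \<bar>u y\<bar> \<le> K"
  shows "filterlim (\<lambda>y. next_term n (v y) (u y)) at_top F"
proof -
  let ?g = "\<lambda>t. (l n / t - (\<bar>kappa n\<bar> + sm n * K) - s0 n * t) / s1 n"
  have "filterlim ?g at_top (at_right 0)"
    using l_pos[OF n] s0_pos[OF n] s1_pos[OF n] by real_asymp
  moreover have "filterlim v (at_right 0) F"
    using v by (rule tendsto_imp_filterlim_at_right)
  ultimately have "filterlim (\<lambda>y. ?g (v y)) at_top F"
    by (rule filterlim_compose)
  moreover have "\<forall>\<^sub>F y in F. ?g (v y) \<le> next_term n (v y) (u y)"
    using u
  proof eventually_elim
    case (elim y)
    then have "sm n * u y \<le> sm n * K"
      using sm_pos[OF n] by (intro mult_left_mono) auto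
    then show ?case
      unfolding next_term_def using s1_pos[OF n]
      by (intro divide_right_mono) (auto simp: abs_ge_self)
  qed
  ultimately show ?thesis
    by (rule filterlim_at_top_mono)
qed

lemma eventually_next_term_neg:
  assumes n: "n \<ge> 1"
  shows "\<forall>\<^sub>F v in at_top. \<forall>u\<ge>c. next_term n v u < 0"
proof -
  let ?g = "\<lambda>v. (l n / v - kappa n - s0 n * v - sm n * c) / s1 n"
  have "filterlim ?g at_bot at_top"
    using l_pos[OF n] s0_pos[OF n] s1_pos[OF n] by real_asymp
  then have "\<forall>\<^sub>F v in at_top. ?g v < 0"
    by (simp add: filterlim_at_bot_dense)
  then show ?thesis
  proof eventually_elim
    case (elim v)
    have "next_term n v u \<le> ?g v" if "u \<ge> c" for u
      unfolding next_term_def using s1_pos[OF n] sm_pos[OF n] that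
      by (intro divide_right_mono) auto
    with elim show ?case
      by fastforce
  qed
qed

context
  fixes x0 :: real
begin

fun orbit :: "nat \<Rightarrow> real \<Rightarrow> real" where
  "orbit 0 y = x0"
| "orbit (Suc 0) y = y"
| "orbit (Suc (Suc n)) y = next_term (Suc n) (orbit (Suc n) y) (orbit n y)"

lemma orbit_Suc: "n \<ge> 1 \<Longrightarrow> orbit (Suc n) y = next_term n (orbit n y) (orbit (n - 1) y)"
  by (cases n) auto

lemma continuous_on_orbit:
  assumes "\<And>y j. y \<in> S \<Longrightarrow> 1 \<le> j \<Longrightarrow> j < k \<Longrightarrow> orbit j y \<noteq> 0"
  shows "continuous_on S (orbit k)"
  using assms
proof (induction k rule: less_induct)
  case (less k)
  consider "k = 0" | "k = 1" | n where "k = Suc (Suc n)"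
    by (metis One_nat_def not0_implies_Suc)
  then show ?case
  proof cases
    case 3
    have "continuous_on S (orbit (Suc n))" "continuous_on S (orbit n)"
      using less 3 by auto
    moreover have "\<forall>y\<in>S. orbit (Suc n) y \<noteq> 0"
      using less.prems 3 by auto
    ultimately show ?thesis
      unfolding 3 orbit.simps next_term_def using s1_pos[of "Suc n"]
      by (auto intro!: continuous_intros)
  qed (auto intro: continuous_intros)
qed

definition admissible :: "nat \<Rightarrow> real \<Rightarrow> real \<Rightarrow> bool" where
  "admissible n a b \<longleftrightarrow> a < b \<and>
     (\<forall>y\<in>{a<..<b}. \<forall>j\<in>{1..n}. orbit j y > 0) \<and>
     bounded (orbit (n - 1) ` {a<..<b}) \<and>
     (\<exists>e\<in>{a, b}. (orbit n \<longlongrightarrow> 0) (at e)) \<and>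
     (\<exists>p\<in>{a<..<b}. orbit (Suc n) p < 0)"

lemma admissible_less: "admissible n a b \<Longrightarrow> a < b"
  by (simp add: admissible_def)

lemma admissible_orbit_pos:
  "admissible n a b \<Longrightarrow> y \<in> {a<..<b} \<Longrightarrow> 1 \<le> j \<Longrightarrow> j \<le> n \<Longrightarrow> orbit j y > 0"
  by (simp add: admissible_def)

lemma admissible_continuous_on:
  assumes "admissible n a b" "k \<le> Suc n"
  shows "continuous_on {a<..<b} (orbit k)"
proof (rule continuous_on_orbit)
  fix y j assume "y \<in> {a<..<b}" "1 \<le> j" "j < k"
  then have "orbit j y > 0"
    using assms(2) by (intro admissible_orbit_pos[OF assms(1)]) simp_all
  then show "orbit j y \<noteq> 0"
    by simp
qed

lemma admissible_base: "\<exists>b. admissible 1 0 b"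
proof -
  have "\<forall>\<^sub>F y in at_top. \<forall>u\<ge>x0. next_term 1 y u < 0"
    by (rule eventually_next_term_neg) simp
  then obtain N where N: "\<And>y. y \<ge> N \<Longrightarrow> orbit 2 y < 0"
    by (auto simp: eventually_at_top_linorder numeral_2_eq_2)
  define p where "p = max N 1"
  have "admissible 1 0 (p + 1)"
    unfolding admissible_def
  proof (intro conjI)
    show "bounded (orbit (1 - 1) ` {0<..<p + 1})"
      by (simp add: image_constant_conv)
    show "\<exists>e\<in>{0, p + 1}. (orbit 1 \<longlongrightarrow> 0) (at e)"
    proof
      have "orbit 1 = (\<lambda>y. y)"
        by auto
      then show "(orbit 1 \<longlongrightarrow> 0) (at 0)"
        by (simp add: tendsto_ident_at)
    qed simp
    show "\<exists>q\<in>{0<..<p + 1}. orbit (Suc 1) q < 0"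
      using N[of p] by (intro bexI[of _ p]) (auto simp: p_def numeral_2_eq_2)
  qed (auto simp: p_def)
  then show ?thesis ..
qed

lemma admissible_SucI:
  assumes adm: "admissible n a b"
    and sub: "{a'..b'} \<subseteq> {a<..<b}" and "a' < b'"
    and pos: "\<And>y. y \<in> {a'<..<b'} \<Longrightarrow> orbit (Suc n) y > 0"
    and e: "e \<in> {a', b'}" "orbit (Suc n) e = 0"
    and q: "q \<in> {a'<..<b'}" "orbit (Suc (Suc n)) q < 0"
  shows "admissible (Suc n) a' b'"
proof -
  have "compact (orbit n ` {a'..b'})"
    by (intro compact_continuous_image continuous_on_subset[OF admissible_continuous_on[OF adm] sub])
      auto
  then have bdd: "bounded (orbit n ` {a'<..<b'})"
    by (rule bounded_subset[OF compact_imp_bounded]) auto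
  have "e \<in> {a'..b'}"
    using e(1) \<open>a' < b'\<close> by auto
  then have "e \<in> {a<..<b}"
    using sub by blast
  then have "isCont (orbit (Suc n)) e"
    using admissible_continuous_on[OF adm, of "Suc n"]
    by (simp add: continuous_on_eq_continuous_at)
  then have lim: "(orbit (Suc n) \<longlongrightarrow> 0) (at e)"
    using e(2) by (simp add: isCont_def)
  have "orbit j y > 0" if y: "y \<in> {a'<..<b'}" and j: "j \<in> {1..Suc n}" for y j
  proof (cases "j = Suc n")
    case False
    have "y \<in> {a'..b'}"
      using y by simp
    with sub have "y \<in> {a<..<b}"
      by blast
    with False j show ?thesis
      by (auto intro: admissible_orbit_pos[OF adm])
  qed (use pos y in simp)
  with bdd lim e(1) q \<open>a' < b'\<close> show ?thesis
    unfolding admissible_def by auto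
qed

lemma admissible_pole:
  assumes adm: "admissible n a b" and n: "n \<ge> 1"
    and F: "(orbit n \<longlongrightarrow> 0) F" "\<forall>\<^sub>F y in F. y \<in> {a<..<b}"
  shows "filterlim (orbit (Suc n)) at_top F"
    and "\<forall>\<^sub>F y in F. orbit (Suc (Suc n)) y < 0"
proof -
  obtain K where K: "\<And>y. y \<in> {a<..<b} \<Longrightarrow> \<bar>orbit (n - 1) y\<bar> \<le> K"
    using adm unfolding admissible_def bounded_real by blast
  have pos: "\<forall>\<^sub>F y in F. orbit n y > 0"
    using F(2) by (rule eventually_mono) (use admissible_orbit_pos[OF adm] n in simp)
  have "orbit (Suc n) = (\<lambda>y. next_term n (orbit n y) (orbit (n - 1) y))"
    using n by (simp add: fun_eq_iff orbit_Suc)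
  moreover have "filterlim (\<lambda>y. next_term n (orbit n y) (orbit (n - 1) y)) at_top F"
    using n F(1) pos eventually_mono[OF F(2) K] by (rule next_term_tendsto_at_top)
  ultimately show top: "filterlim (orbit (Suc n)) at_top F"
    by simp
  have "\<forall>\<^sub>F v in at_top. \<forall>u\<ge>0. next_term (Suc n) v u < 0"
    by (rule eventually_next_term_neg) simp
  then have "\<forall>\<^sub>F y in F. \<forall>u\<ge>0. next_term (Suc n) (orbit (Suc n) y) u < 0"
    using top unfolding filterlim_iff by blast
  with pos show "\<forall>\<^sub>F y in F. orbit (Suc (Suc n)) y < 0"
    by eventually_elim (simp add: less_imp_le)
qed

lemma admissible_shrink:
  assumes adm: "admissible n a b" and n: "n \<ge> 1"
  shows "\<exists>a' b'. {a'..b'} \<subseteq> {a<..<b} \<and> admissible (Suc n) a' b'"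
proof -
  obtain e p where "a < b" and e: "e \<in> {a, b}" "(orbit n \<longlongrightarrow> 0) (at e)"
    and p: "p \<in> {a<..<b}" "orbit (Suc n) p < 0"
    using adm unfolding admissible_def by blast
  have cont: "continuous_on {a<..<b} (orbit (Suc n))"
    using adm by (rule admissible_continuous_on) simp
  from e(1) consider "e = a" | "e = b"
    by blast
  then show ?thesis
  proof cases
    case 1
    have "(orbit n \<longlongrightarrow> 0) (at_right a)"
      using e(2) 1 by (simp add: filterlim_at_split)
    moreover have "\<forall>\<^sub>F y in at_right a. y \<in> {a<..<b}"
      using \<open>a < b\<close> by (intro eventually_at_rightI[of a b]) auto
    ultimately have blowup: "filterlim (orbit (Suc n)) at_top (at_right a)"
      and neg: "\<forall>\<^sub>F y in at_right a. orbit (Suc (Suc n)) y < 0"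
      using admissible_pole[OF adm n] by blast+
    obtain z where z: "z \<in> {a<..<p}" "orbit (Suc n) z = 0"
      and z_pos: "\<And>y. y \<in> {a<..<z} \<Longrightarrow> orbit (Suc n) y > 0"
      using first_zero_after_pole[OF cont blowup p] by blast
    have "\<forall>\<^sub>F y in at_right a. y \<in> {a<..<z}"
      using z by (intro eventually_at_rightI[of a z]) auto
    with neg have "\<forall>\<^sub>F y in at_right a. y \<in> {a<..<z} \<and> orbit (Suc (Suc n)) y < 0"
      by (intro eventually_conj)
    then obtain q where q: "q \<in> {a<..<z}" "orbit (Suc (Suc n)) q < 0"
      using eventually_happens'[OF trivial_limit_at_right_real] by blast
    have "admissible (Suc n) ((a + q) / 2) z"
      using q z z_pos p
      by (intro admissible_SucI[OF adm, where e = z and q = q]) auto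
    moreover have "{(a + q) / 2..z} \<subseteq> {a<..<b}"
      using q z p by auto
    ultimately show ?thesis
      by blast
  next
    case 2
    have "(orbit n \<longlongrightarrow> 0) (at_left b)"
      using e(2) 2 by (simp add: filterlim_at_split)
    moreover have "\<forall>\<^sub>F y in at_left b. y \<in> {a<..<b}"
      using \<open>a < b\<close> by (intro eventually_at_leftI[of a b]) auto
    ultimately have blowup: "filterlim (orbit (Suc n)) at_top (at_left b)"
      and neg: "\<forall>\<^sub>F y in at_left b. orbit (Suc (Suc n)) y < 0"
      using admissible_pole[OF adm n] by blast+
    obtain z where z: "z \<in> {p<..<b}" "orbit (Suc n) z = 0"
      and z_pos: "\<And>y. y \<in> {z<..<b} \<Longrightarrow> orbit (Suc n) y > 0"
      using first_zero_before_pole[OF cont blowup p] by blast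
    have "\<forall>\<^sub>F y in at_left b. y \<in> {z<..<b}"
      using z by (intro eventually_at_leftI[of z b]) auto
    with neg have "\<forall>\<^sub>F y in at_left b. y \<in> {z<..<b} \<and> orbit (Suc (Suc n)) y < 0"
      by (intro eventually_conj)
    then obtain q where q: "q \<in> {z<..<b}" "orbit (Suc (Suc n)) q < 0"
      using eventually_happens'[OF trivial_limit_at_left_real] by blast
    have "admissible (Suc n) z ((q + b) / 2)"
      using q z z_pos p
      by (intro admissible_SucI[OF adm, where e = z and q = q]) auto
    moreover have "{z..(q + b) / 2} \<subseteq> {a<..<b}"
      using q z p by auto
    ultimately show ?thesis
      by blast
  qed
qed

lemma exists_positive_orbit: "\<exists>y>0. \<forall>n\<ge>1. orbit n y > 0"
proof -
  have "\<exists>I. \<forall>n. admissible (Suc n) (fst (I n)) (snd (I n)) \<and>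
      {fst (I (Suc n))..snd (I (Suc n))} \<subseteq> {fst (I n)<..<snd (I n)}"
  proof (rule dependent_nat_choice)
    obtain b where "admissible 1 0 b"
      using admissible_base by blast
    then show "\<exists>I. admissible (Suc 0) (fst I) (snd I)"
      by (intro exI[of _ "(0, b)"]) simp
    fix I n assume "admissible (Suc n) (fst I) (snd I)"
    then have "\<exists>a' b'. {a'..b'} \<subseteq> {fst I<..<snd I} \<and> admissible (Suc (Suc n)) a' b'"
      by (rule admissible_shrink) simp
    then obtain a' b' where "{a'..b'} \<subseteq> {fst I<..<snd I}" "admissible (Suc (Suc n)) a' b'"
      by blast
    then show "\<exists>J. admissible (Suc (Suc n)) (fst J) (snd J) \<and> {fst J..snd J} \<subseteq> {fst I<..<snd I}"
      by (intro exI[of _ "(a', b')"]) simp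
  qed
  then obtain I where adm: "\<And>n. admissible (Suc n) (fst (I n)) (snd (I n))"
    and nested: "\<And>n. {fst (I (Suc n))..snd (I (Suc n))} \<subseteq> {fst (I n)<..<snd (I n)}"
    by blast
  define C where "C n = {fst (I n)..snd (I n)}" for n
  have "\<Inter> (range C) \<noteq> {}"
  proof (rule compact_nest)
    show "compact (C n)" "C n \<noteq> {}" for n
      using admissible_less[OF adm[of n]] by (auto simp: C_def)
    have "C (Suc n) \<subseteq> C n" for n
      using nested[of n] by (auto simp: C_def)
    then show "C n \<subseteq> C m" if "m \<le> n" for m n
      using lift_Suc_antimono_le[of C] that by blast
  qed
  then obtain y where y: "\<And>n. y \<in> C n"
    by blast
  have "orbit n y > 0" if "n \<ge> 1" for n
  proof -
    have "y \<in> {fst (I n)<..<snd (I n)}"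
      using y[of "Suc n"] nested[of n] unfolding C_def by blast
    then show ?thesis
      using admissible_orbit_pos[OF adm[of n]] that by simp
  qed
  moreover from this[of 1] have "y > 0"
    by simp
  ultimately show ?thesis
    by blast
qed

lemma exists_positive_solution:
  "\<exists>x1>0. \<exists>x :: nat \<Rightarrow> real. x 0 = x0 \<and> x 1 = x1 \<and>
     (\<forall>n\<ge>1. l n = x n * (s1 n * x (n + 1) + s0 n * x n + sm n * x (n - 1)) + kappa n * x n) \<and>
     (\<forall>n\<ge>1. x n > 0)"
proof -
  obtain y where "y > 0" and pos: "\<And>n. n \<ge> 1 \<Longrightarrow> orbit n y > 0"
    using exists_positive_orbit by blast
  show ?thesis
  proof (intro exI[of _ y] conjI exI[of _ "\<lambda>n. orbit n y"] allI impI)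
    fix n :: nat assume n: "n \<ge> 1"
    show "l n = orbit n y * (s1 n * orbit (n + 1) y + s0 n * orbit n y
        + sm n * orbit (n - 1) y) + kappa n * orbit n y"
      using recurrence_iff_next_term[OF n, of "orbit n y"] pos[OF n] orbit_Suc[OF n] by simp
  qed (use \<open>y > 0\<close> pos in simp_all)
qed

end

end

theorem theorem4p1:
  fixes l s0 s1 sm kappa :: "nat \<Rightarrow> real"
  assumes "\<forall>n\<ge>1. l n > 0"
    and "\<forall>n\<ge>1. s0 n > 0"
    and "\<forall>n\<ge>1. s1 n > 0"
    and "\<forall>n\<ge>1. sm n > 0"
  shows "\<forall>x0::real. \<exists>x1>0. \<exists>x :: nat \<Rightarrow> real.
           x 0 = x0 \<and> x 1 = x1 \<and>
           (\<forall>n\<ge>1. l n = x n * (s1 n * x (n + 1) + s0 n * x n + sm n * x (n - 1)) + kappa n * x n) \<and>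
           (\<forall>n\<ge>1. x n > 0)"
proof (intro allI three_term_recurrence.exists_positive_solution)
  show "three_term_recurrence l s0 s1 sm"
    using assms by unfold_locales auto
qed

end
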